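(* Let $M(n)$ denote the minimum, over all forcibly connected graphical degree sequences of length $n$, of the largest term of the sequence. Then $M(n)=\Omega(\sqrt{n})$; that is, there is a constant $c>0$ such that $M(n)>c\sqrt{n}$ for all sufficiently large $n$.
   Context: A graphical degree sequence of length $n$ is a non-increasing sequence of non-negative integers $d_1\ge\cdots\ge d_n$ that is the vertex degree sequence of some simple graph (finite, undirected, no loops or multiple edges) on $n$ vertices; such a graph is a realization. A graphical degree sequence is forcibly connected if every one of its realizations is connected. *)

theory Defs
  imports Complex_Main
begin

definition simple_graph_on :: "nat \<Rightarrow> (nat \<Rightarrow> nat \<Rightarrow> bool) \<Rightarrow> bool" where
  "simple_graph_on n E \<longleftrightarrow> (\<forall>i j. E i j \<longrightarrow> i < n \<and> j < n \<and> i \<noteq> j \<and> E j i)"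

definition degree_in :: "nat \<Rightarrow> (nat \<Rightarrow> nat \<Rightarrow> bool) \<Rightarrow> nat \<Rightarrow> nat" where
  "degree_in n E i = card {j. j < n \<and> E i j}"

definition realizes :: "(nat \<Rightarrow> nat \<Rightarrow> bool) \<Rightarrow> nat list \<Rightarrow> bool" where
  "realizes E d \<longleftrightarrow> simple_graph_on (length d) E \<and>
     (\<forall>i < length d. degree_in (length d) E i = d ! i)"

definition graphical :: "nat list \<Rightarrow> bool" where
  "graphical d \<longleftrightarrow> sorted_wrt (\<ge>) d \<and> (\<exists>E. realizes E d)"

definition connected_on :: "nat \<Rightarrow> (nat \<Rightarrow> nat \<Rightarrow> bool) \<Rightarrow> bool" where
  "connected_on n E \<longleftrightarrow> (\<forall>i < n. \<forall>j < n. (i, j) \<in> {(a, b). E a b}\<^sup>*)"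

definition forcibly_connected :: "nat list \<Rightarrow> bool" where
  "forcibly_connected d \<longleftrightarrow> graphical d \<and> (\<forall>E. realizes E d \<longrightarrow> connected_on (length d) E)"

definition M :: "nat \<Rightarrow> nat" where
  "M n = Min {Max (set d) | d. length d = n \<and> forcibly_connected d}"

end

theory Submission
  imports Defs "HOL-Library.Multiset"
begin

(* If all terms of d are at most D and its length n exceeds 64 (D + 1)^2, then d has a
   disconnected realization. Split the vertices into halves A and B such that the degrees in A
   have even sum; then every realization has an even number of edges between A and B. In a
   realization minimising this number, a nonempty cut has two edges, and a degree-preserving
   switch removes two cut edges: directly, if two cut edges are far apart, and otherwise through
   an extra edge inside A and one inside B that avoid the neighbourhoods of two cut edges; such
   edges exist because then the cut has at most 2 D (D + 1) edges. So the minimal cut is empty,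
   and M n + 1 \<ge> sqrt n / 8. *)

lemma card_sym_irrefl_even:
  fixes R :: "('a::linorder \<times> 'a) set"
  assumes "finite R" "sym R" "irrefl R"
  shows "even (card R)"
proof -
  define L where "L = {p \<in> R. fst p < snd p}"
  have R_split: "R = L \<union> prod.swap ` L"
  proof (intro equalityI subsetI)
    fix p assume "p \<in> R"
    moreover obtain a b where p: "p = (a, b)" by fastforce
    moreover have "a \<noteq> b" using assms(3) \<open>p \<in> R\<close> p unfolding irrefl_def by auto
    ultimately show "p \<in> L \<union> prod.swap ` L"
      using assms(2) unfolding L_def sym_def by (cases "a < b") (auto simp: image_iff)
  qed (use assms(2) in \<open>auto simp: L_def sym_def\<close>)
  have "finite L" using assms(1) by (simp add: L_def)
  moreover have "L \<inter> prod.swap ` L = {}" by (auto simp: L_def)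
  ultimately have "card R = card L + card (prod.swap ` L)"
    by (subst R_split) (simp add: card_Un_disjoint)
  also have "card (prod.swap ` L) = card L"
    by (simp add: card_image)
  finally show ?thesis by simp
qed

lemma card_Diff_Un_eq:
  assumes "finite N" "R \<subseteq> N" "S \<inter> N = {}" "finite S" "card R = card S"
  shows "card ((N - R) \<union> S) = card N"
proof -
  have "card ((N - R) \<union> S) = card (N - R) + card S"
    using assms by (intro card_Un_disjoint) auto
  moreover have "card (N - R) = card N - card R"
    using assms by (simp add: card_Diff_subset finite_subset)
  moreover have "card R \<le> card N" using assms card_mono by blast
  ultimately show ?thesis using assms by simp
qed

definition nbhd :: "nat \<Rightarrow> (nat \<Rightarrow> nat \<Rightarrow> bool) \<Rightarrow> nat \<Rightarrow> nat set" where
  "nbhd n E w = {j. j < n \<and> E w j}"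

definition cut_edges :: "nat \<Rightarrow> nat set \<Rightarrow> (nat \<Rightarrow> nat \<Rightarrow> bool) \<Rightarrow> (nat \<times> nat) set" where
  "cut_edges n A E = {(a, b). a \<in> A \<and> b < n \<and> b \<notin> A \<and> E a b}"

lemma finite_nbhd [simp]: "finite (nbhd n E w)"
  unfolding nbhd_def by auto

lemma finite_cut_edges: "A \<subseteq> {..<n} \<Longrightarrow> finite (cut_edges n A E)"
  unfolding cut_edges_def by (rule finite_subset[of _ "{..<n} \<times> {..<n}"]) auto

lemma realizes_simple_graph: "realizes E d \<Longrightarrow> simple_graph_on (length d) E"
  unfolding realizes_def by simp

lemma realizes_card_nbhd:
  "realizes E d \<Longrightarrow> w < length d \<Longrightarrow> card (nbhd (length d) E w) = d ! w"
  unfolding realizes_def degree_in_def nbhd_def by simp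

lemma sum_card_nbhd_eq:
  assumes "simple_graph_on n E" "X \<subseteq> {..<n}"
  shows "(\<Sum>a\<in>X. card (nbhd n E a)) = card {(a, b). a \<in> X \<and> b \<in> X \<and> E a b} + card (cut_edges n X E)"
proof -
  have fin: "finite X" using assms(2) finite_subset by blast
  have "(\<Sum>a\<in>X. card (nbhd n E a)) = card (Sigma X (nbhd n E))"
    using fin by simp
  also have "Sigma X (nbhd n E) = {(a, b). a \<in> X \<and> b \<in> X \<and> E a b} \<union> cut_edges n X E"
    using assms unfolding nbhd_def cut_edges_def simple_graph_on_def by auto
  also have "card \<dots> = card {(a, b). a \<in> X \<and> b \<in> X \<and> E a b} + card (cut_edges n X E)"
    by (rule card_Un_disjoint)
      (use fin finite_cut_edges[OF assms(2)] in \<open>auto intro: finite_subset[of _ "X \<times> X"] simp: cut_edges_def\<close>)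
  finally show ?thesis .
qed

lemma even_sum_card_nbhd_iff:
  assumes "simple_graph_on n E" "X \<subseteq> {..<n}"
  shows "even (\<Sum>a\<in>X. card (nbhd n E a)) \<longleftrightarrow> even (card (cut_edges n X E))"
proof -
  have "finite X" using assms(2) finite_subset by blast
  then have "even (card {(a, b). a \<in> X \<and> b \<in> X \<and> E a b})"
    using assms(1) unfolding simple_graph_on_def
    by (intro card_sym_irrefl_even) (auto intro: finite_subset[of _ "X \<times> X"] simp: sym_def irrefl_def)
  then show ?thesis using sum_card_nbhd_eq[OF assms] by simp
qed

lemma not_connected_if_cut_edges_empty:
  assumes "simple_graph_on n E" "A \<subseteq> {..<n}" "a \<in> A" "b < n" "b \<notin> A"
    and "cut_edges n A E = {}"
  shows "\<not> connected_on n E"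
proof
  have "{(x, y). E x y} `` A \<subseteq> A"
    using assms(1,6) unfolding cut_edges_def simple_graph_on_def by blast
  then have "{(x, y). E x y}\<^sup>* `` A = A" by (rule Image_closed_trancl)
  moreover assume "connected_on n E"
  then have "(a, b) \<in> {(x, y). E x y}\<^sup>*" using assms(2-4) unfolding connected_on_def by blast
  ultimately show False using assms(3,5) by blast
qed

definition list_adj :: "(nat \<times> nat) list \<Rightarrow> nat \<Rightarrow> nat \<Rightarrow> bool" where
  "list_adj es i j \<longleftrightarrow> (i, j) \<in> set es \<or> (j, i) \<in> set es"

definition simple_edge_list :: "(nat \<times> nat) list \<Rightarrow> bool" where
  "simple_edge_list es \<longleftrightarrow> distinct es \<and> (\<forall>i j. (i, j) \<in> set es \<longrightarrow> i \<noteq> j \<and> (j, i) \<notin> set es)"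

definition endpoints :: "(nat \<times> nat) list \<Rightarrow> nat multiset" where
  "endpoints es = mset (concat (map (\<lambda>(i, j). [i, j]) es))"

definition switch :: "(nat \<Rightarrow> nat \<Rightarrow> bool) \<Rightarrow> (nat \<times> nat) list \<Rightarrow> (nat \<times> nat) list \<Rightarrow> nat \<Rightarrow> nat \<Rightarrow> bool" where
  "switch E rem add i j \<longleftrightarrow> (E i j \<and> \<not> list_adj rem i j) \<or> list_adj add i j"

lemma list_adj_sym: "list_adj es i j \<Longrightarrow> list_adj es j i"
  unfolding list_adj_def by auto

lemma finite_list_adj: "finite {j. list_adj es w j}"
  by (rule finite_subset[of _ "fst ` set es \<union> snd ` set es"]) (auto simp: list_adj_def intro: rev_image_eqI)

lemma simple_edge_list_ConsD:
  "simple_edge_list ((a, b) # es) \<Longrightarrow> simple_edge_list es \<and> a \<noteq> b \<and> \<not> list_adj es a b"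
  unfolding simple_edge_list_def list_adj_def by auto

lemma card_list_adj: "simple_edge_list es \<Longrightarrow> card {j. list_adj es w j} = count (endpoints es) w"
proof (induction es)
  case Nil
  then show ?case by (simp add: list_adj_def endpoints_def)
next
  case (Cons e es)
  obtain a b where e: "e = (a, b)" by fastforce
  with Cons.prems have es: "simple_edge_list es" and ab: "a \<noteq> b" "\<not> list_adj es a b"
    by (auto dest: simple_edge_list_ConsD)
  have "{j. list_adj (e # es) w j} =
      {j. list_adj es w j} \<union> (if w = a then {b} else {}) \<union> (if w = b then {a} else {})"
    unfolding e list_adj_def by auto
  moreover have "count (endpoints (e # es)) w =
      count (endpoints es) w + (if w = a then 1 else 0) + (if w = b then 1 else 0)"
    unfolding e endpoints_def by simp
  ultimately show ?case
    using Cons.IH[OF es] ab finite_list_adj[of es w] list_adj_sym[of es b a] by (auto simp: card_insert_if)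
qed

lemma realizes_switch:
  assumes r: "realizes E d" and n: "n = length d"
    and rem: "simple_edge_list rem" "\<forall>i j. list_adj rem i j \<longrightarrow> E i j"
    and add: "simple_edge_list add" "\<forall>i j. list_adj add i j \<longrightarrow> \<not> E i j \<and> i < n \<and> j < n"
    and same_ends: "endpoints rem = endpoints add"
  shows "realizes (switch E rem add) d"
proof -
  have sg: "simple_graph_on n E" using realizes_simple_graph[OF r] n by simp
  have irr: "\<not> list_adj add i i" for i
    using add(1) unfolding simple_edge_list_def list_adj_def by blast
  have sg': "simple_graph_on n (switch E rem add)"
    unfolding simple_graph_on_def switch_def
  proof (intro allI impI)
    fix i j assume "E i j \<and> \<not> list_adj rem i j \<or> list_adj add i j"
    then show "i < n \<and> j < n \<and> i \<noteq> j \<and> (E j i \<and> \<not> list_adj rem j i \<or> list_adj add j i)"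
      using sg add(2) irr[of i] list_adj_sym[of rem j i] list_adj_sym[of add i j]
      unfolding simple_graph_on_def by blast
  qed
  have "card (nbhd n (switch E rem add) w) = card (nbhd n E w)" for w
  proof -
    have "nbhd n (switch E rem add) w = (nbhd n E w - {j. list_adj rem w j}) \<union> {j. list_adj add w j}"
      using add(2) unfolding nbhd_def switch_def by blast
    moreover have "{j. list_adj rem w j} \<subseteq> nbhd n E w"
      using rem(2) sg unfolding nbhd_def simple_graph_on_def by blast
    moreover have "{j. list_adj add w j} \<inter> nbhd n E w = {}"
      using add(2) unfolding nbhd_def by blast
    moreover have "card {j. list_adj rem w j} = card {j. list_adj add w j}"
      using card_list_adj[OF rem(1)] card_list_adj[OF add(1)] same_ends by simp
    ultimately show ?thesis using card_Diff_Un_eq[OF finite_nbhd _ _ finite_list_adj] by simp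
  qed
  then show ?thesis using r sg' n unfolding realizes_def degree_in_def nbhd_def by simp
qed

lemma card_cut_edges_switch_less:
  assumes "A \<subseteq> {..<n}" "\<forall>i j. list_adj add i j \<longrightarrow> (i \<in> A \<longleftrightarrow> j \<in> A)"
    and "e \<in> set rem" "e \<in> cut_edges n A E"
  shows "card (cut_edges n A (switch E rem add)) < card (cut_edges n A E)"
proof (rule psubset_card_mono[OF finite_cut_edges[OF assms(1)]])
  have "cut_edges n A (switch E rem add) \<subseteq> cut_edges n A E - {e}"
  proof
    fix p assume "p \<in> cut_edges n A (switch E rem add)"
    then obtain a b where p: "p = (a, b)" "a \<in> A" "b < n" "b \<notin> A" "switch E rem add a b"
      unfolding cut_edges_def by blast
    then have "E a b" "\<not> list_adj rem a b"
      using assms(2) unfolding switch_def by blast+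
    then show "p \<in> cut_edges n A E - {e}"
      using p assms(3) unfolding cut_edges_def list_adj_def by auto
  qed
  then show "cut_edges n A (switch E rem add) \<subset> cut_edges n A E"
    using assms(4) by blast
qed

lemma cut_edges_decrease_by_switch:
  assumes "realizes E d" "n = length d" "A \<subseteq> {..<n}"
    and "simple_edge_list rem" "\<forall>i j. list_adj rem i j \<longrightarrow> E i j"
    and "simple_edge_list add" "\<forall>i j. list_adj add i j \<longrightarrow> \<not> E i j \<and> i < n \<and> j < n"
    and "endpoints rem = endpoints add"
    and "\<forall>i j. list_adj add i j \<longrightarrow> (i \<in> A \<longleftrightarrow> j \<in> A)"
    and "e \<in> set rem" "e \<in> cut_edges n A E"
  shows "\<exists>E'. realizes E' d \<and> card (cut_edges n A E') < card (cut_edges n A E)"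
  using realizes_switch[OF assms(1,2,4-8)] card_cut_edges_switch_less[OF assms(3,9-11)] by blast

definition closed_nbhd :: "nat \<Rightarrow> (nat \<Rightarrow> nat \<Rightarrow> bool) \<Rightarrow> nat \<Rightarrow> nat set" where
  "closed_nbhd n E w = insert w (nbhd n E w)"

lemma finite_closed_nbhd [simp]: "finite (closed_nbhd n E w)"
  unfolding closed_nbhd_def by simp

lemma card_closed_nbhd_le: "card (nbhd n E w) \<le> D \<Longrightarrow> card (closed_nbhd n E w) \<le> D + 1"
  unfolding closed_nbhd_def by (simp add: card_insert_if)

lemma card_Sigma_nbhd_le:
  "finite W \<Longrightarrow> \<forall>w. card (nbhd n E w) \<le> D \<Longrightarrow> card (Sigma W (nbhd n E)) \<le> card W * D"
  using sum_bounded_above[of W "\<lambda>w. card (nbhd n E w)" D] by simp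

lemma cut_edges_complement:
  assumes "simple_graph_on n E" "A \<subseteq> {..<n}"
  shows "cut_edges n ({..<n} - A) E = prod.swap ` cut_edges n A E"
  using assms unfolding simple_graph_on_def cut_edges_def by auto

lemma all_list_adj_iff: "(\<forall>i j. list_adj es i j \<longrightarrow> P i j) \<longleftrightarrow> (\<forall>(i, j) \<in> set es. P i j \<and> P j i)"
  unfolding list_adj_def by auto

lemma cut_edges_decrease_two_switch:
  assumes r: "realizes E d" and n: "n = length d" and A: "A \<subseteq> {..<n}"
    and e1: "(a1, b1) \<in> cut_edges n A E" and e2: "(a2, b2) \<in> cut_edges n A E"
    and far: "a2 \<notin> closed_nbhd n E a1" "b2 \<notin> closed_nbhd n E b1"
  shows "\<exists>E'. realizes E' d \<and> card (cut_edges n A E') < card (cut_edges n A E)"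
proof (rule cut_edges_decrease_by_switch[OF r n A])
  have sg: "simple_graph_on n E" using realizes_simple_graph[OF r] n by simp
  have sides: "a1 \<in> A" "a2 \<in> A" "b1 \<notin> A" "b2 \<notin> A" "a1 < n" "a2 < n" "b1 < n" "b2 < n"
    "E a1 b1" "E a2 b2" using e1 e2 A unfolding cut_edges_def by auto
  then have edges: "E b1 a1" "E b2 a2" "a1 \<noteq> b1" "a2 \<noteq> b2"
    using sg unfolding simple_graph_on_def by blast+
  have "a2 \<noteq> a1" "\<not> E a1 a2" "b2 \<noteq> b1" "\<not> E b1 b2"
    using far sides unfolding closed_nbhd_def nbhd_def by auto
  moreover have "\<not> E a2 a1" "\<not> E b2 b1"
    using calculation sg unfolding simple_graph_on_def by blast+
  ultimately have non_edges: "a1 \<noteq> a2" "\<not> E a1 a2" "\<not> E a2 a1" "b1 \<noteq> b2" "\<not> E b1 b2" "\<not> E b2 b1"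
    by simp_all
  show "simple_edge_list [(a1, b1), (a2, b2)]" "simple_edge_list [(a1, a2), (b1, b2)]"
    using sides edges non_edges unfolding simple_edge_list_def by auto
  show "\<forall>i j. list_adj [(a1, b1), (a2, b2)] i j \<longrightarrow> E i j"
    using sides edges by (simp add: all_list_adj_iff)
  show "\<forall>i j. list_adj [(a1, a2), (b1, b2)] i j \<longrightarrow> \<not> E i j \<and> i < n \<and> j < n"
    using sides non_edges by (simp add: all_list_adj_iff)
  show "endpoints [(a1, b1), (a2, b2)] = endpoints [(a1, a2), (b1, b2)]"
    unfolding endpoints_def by (simp add: add_mset_commute)
  show "\<forall>i j. list_adj [(a1, a2), (b1, b2)] i j \<longrightarrow> (i \<in> A \<longleftrightarrow> j \<in> A)"
    using sides by (simp add: all_list_adj_iff)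
qed (use e1 in auto)

lemma cut_edges_decrease_four_switch:
  assumes r: "realizes E d" and n: "n = length d" and A: "A \<subseteq> {..<n}"
    and e1: "(a1, b1) \<in> cut_edges n A E" and e2: "(a2, b2) \<in> cut_edges n A E"
    and e12: "(a1, b1) \<noteq> (a2, b2)"
    and xy: "x \<in> A" "y \<in> A" "E x y" "{x, y} \<inter> (closed_nbhd n E a1 \<union> closed_nbhd n E a2) = {}"
    and uv: "u \<notin> A" "v \<notin> A" "E u v" "{u, v} \<inter> (closed_nbhd n E b1 \<union> closed_nbhd n E b2) = {}"
  shows "\<exists>E'. realizes E' d \<and> card (cut_edges n A E') < card (cut_edges n A E)"
proof (rule cut_edges_decrease_by_switch[OF r n A])
  have sg: "simple_graph_on n E" using realizes_simple_graph[OF r] n by simp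
  have sides: "a1 \<in> A" "a2 \<in> A" "b1 \<notin> A" "b2 \<notin> A" "E a1 b1" "E a2 b2"
    using e1 e2 unfolding cut_edges_def by auto
  then have edges: "E b1 a1" "E b2 a2" "E y x" "E v u"
    and bounds: "a1 < n" "a2 < n" "b1 < n" "b2 < n" "x < n" "y < n" "u < n" "v < n" "x \<noteq> y" "u \<noteq> v"
    using sg xy(3) uv(3) unfolding simple_graph_on_def by blast+
  have "x \<noteq> a1" "x \<noteq> a2" "\<not> E a1 x" "\<not> E a2 x" "y \<noteq> a1" "y \<noteq> a2" "\<not> E a1 y" "\<not> E a2 y"
    "u \<noteq> b1" "u \<noteq> b2" "\<not> E b1 u" "\<not> E b2 u" "v \<noteq> b1" "v \<noteq> b2" "\<not> E b1 v" "\<not> E b2 v"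
    using xy(4) uv(4) bounds unfolding closed_nbhd_def nbhd_def by auto
  moreover have "\<not> E x a1" "\<not> E y a2" "\<not> E u b1" "\<not> E v b2"
    using calculation sg unfolding simple_graph_on_def by blast+
  ultimately have non_edges: "a1 \<noteq> x" "\<not> E a1 x" "\<not> E x a1" "a2 \<noteq> y" "\<not> E a2 y" "\<not> E y a2"
      "b1 \<noteq> u" "\<not> E b1 u" "\<not> E u b1" "b2 \<noteq> v" "\<not> E b2 v" "\<not> E v b2"
    and distinct_ends: "x \<noteq> a2" "y \<noteq> a1"
    by simp_all
  show "simple_edge_list [(a1, b1), (a2, b2), (x, y), (u, v)]"
    using sides xy uv bounds e12 unfolding simple_edge_list_def by auto
  show "simple_edge_list [(a1, x), (a2, y), (b1, u), (b2, v)]"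
    using sides xy uv bounds(9,10) non_edges distinct_ends unfolding simple_edge_list_def by auto
  show "\<forall>i j. list_adj [(a1, b1), (a2, b2), (x, y), (u, v)] i j \<longrightarrow> E i j"
    using sides xy(3) uv(3) edges by (simp add: all_list_adj_iff)
  show "\<forall>i j. list_adj [(a1, x), (a2, y), (b1, u), (b2, v)] i j \<longrightarrow> \<not> E i j \<and> i < n \<and> j < n"
    using bounds non_edges by (simp add: all_list_adj_iff)
  show "endpoints [(a1, b1), (a2, b2), (x, y), (u, v)] = endpoints [(a1, x), (a2, y), (b1, u), (b2, v)]"
    unfolding endpoints_def by (simp add: add_mset_commute)
  show "\<forall>i j. list_adj [(a1, x), (a2, y), (b1, u), (b2, v)] i j \<longrightarrow> (i \<in> A \<longleftrightarrow> j \<in> A)"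
    using sides xy uv by (simp add: all_list_adj_iff)
qed (use e1 in auto)

lemma card_cut_edges_le_if_covered:
  assumes sg: "simple_graph_on n E" and dmax: "\<forall>w. card (nbhd n E w) \<le> D"
    and cover: "\<forall>(p, q) \<in> cut_edges n A E. p \<in> closed_nbhd n E a \<or> q \<in> closed_nbhd n E b"
  shows "card (cut_edges n A E) \<le> 2 * (D + 1) * D"
proof -
  let ?Na = "Sigma (closed_nbhd n E a) (nbhd n E)" and ?Nb = "Sigma (closed_nbhd n E b) (nbhd n E)"
  have "cut_edges n A E \<subseteq> ?Na \<union> prod.swap ` ?Nb"
  proof
    fix c assume c: "c \<in> cut_edges n A E"
    then obtain p q where pq: "c = (p, q)" "q < n" "E p q" unfolding cut_edges_def by blast
    then have "p < n" "E q p" using sg unfolding simple_graph_on_def by blast+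
    then have "(p, q) \<in> ?Na \<or> (q, p) \<in> ?Nb"
      using cover c pq unfolding nbhd_def by auto
    then show "c \<in> ?Na \<union> prod.swap ` ?Nb" using pq(1) by (auto simp: image_iff)
  qed
  then have "card (cut_edges n A E) \<le> card (?Na \<union> prod.swap ` ?Nb)"
    by (rule card_mono[rotated]) simp
  also have "\<dots> \<le> card ?Na + card (prod.swap ` ?Nb)"
    by (rule card_Un_le)
  also have "\<dots> = card ?Na + card ?Nb"
    by (simp add: card_image)
  also have "\<dots> \<le> (D + 1) * D + (D + 1) * D"
    using card_Sigma_nbhd_le[OF finite_closed_nbhd dmax] card_closed_nbhd_le[OF spec[OF dmax]]
    by (intro add_mono) (meson le_trans mult_le_mono1)+
  finally show ?thesis by simp
qed

lemma exists_edge_avoiding: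
  assumes sg: "simple_graph_on n E" and X: "X \<subseteq> {..<n}" and S: "finite S" "card S \<le> s"
    and dmax: "\<forall>w. card (nbhd n E w) \<le> D" and dmin: "\<forall>w<n. nbhd n E w \<noteq> {}"
    and cut: "card (cut_edges n X E) \<le> K" and big: "s + s * D + K < card X"
  shows "\<exists>x y. x \<in> X \<and> y \<in> X \<and> E x y \<and> {x, y} \<inter> S = {}"
proof -
  let ?C = "cut_edges n X E"
  define Bad where "Bad = S \<union> (\<Union>t\<in>S. nbhd n E t) \<union> fst ` ?C"
  have "card (\<Union>t\<in>S. nbhd n E t) \<le> card (Sigma S (nbhd n E))"
    using card_UN_le[OF S(1), of "nbhd n E"] S(1) by simp
  also have "\<dots> \<le> s * D"
    using card_Sigma_nbhd_le[OF S(1) dmax] S(2) by (meson le_trans mult_le_mono1)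
  finally have "card (\<Union>t\<in>S. nbhd n E t) \<le> s * D" .
  moreover have "card (fst ` ?C) \<le> K"
    using card_image_le[OF finite_cut_edges[OF X, of E], of fst] cut by linarith
  moreover have "card Bad \<le> card S + card (\<Union>t\<in>S. nbhd n E t) + card (fst ` ?C)"
    unfolding Bad_def by (meson add_le_mono card_Un_le le_refl le_trans)
  ultimately have "card Bad < card X" using S(2) big by linarith
  moreover have "finite Bad" unfolding Bad_def using S(1) finite_cut_edges[OF X] by simp
  ultimately obtain x where x: "x \<in> X" "x \<notin> Bad" by (meson card_mono not_le subsetI)
  then obtain y where y: "y < n" "E x y" using dmin X unfolding nbhd_def by blast
  have "y \<in> X"
    using x y unfolding Bad_def cut_edges_def by (auto simp: image_iff)
  moreover have "y \<notin> S"
    using x y sg X unfolding Bad_def nbhd_def simple_graph_on_def by blast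
  ultimately show ?thesis using x y unfolding Bad_def by blast
qed

lemma cut_edges_decrease:
  assumes r: "realizes E d" and n: "n = length d" and A: "A \<subseteq> {..<n}"
    and dmax: "\<forall>i<n. d ! i \<le> D" and dmin: "\<forall>i<n. d ! i \<noteq> 0"
    and cA: "4 * (D + 1) * (D + 1) < card A" and cB: "4 * (D + 1) * (D + 1) < card ({..<n} - A)"
    and c2: "card (cut_edges n A E) \<ge> 2"
  shows "\<exists>E'. realizes E' d \<and> card (cut_edges n A E') < card (cut_edges n A E)"
proof -
  let ?C = "cut_edges n A E" and ?N = "closed_nbhd n E"
  have sg: "simple_graph_on n E" using realizes_simple_graph[OF r] n by simp
  have deg: "w < n \<Longrightarrow> card (nbhd n E w) = d ! w" for w
    using realizes_card_nbhd[OF r] n by simp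
  have dmax': "\<forall>w. card (nbhd n E w) \<le> D"
  proof
    fix w show "card (nbhd n E w) \<le> D"
    proof (cases "w < n")
      case False
      then have "nbhd n E w = {}"
        using sg unfolding nbhd_def simple_graph_on_def by (blast dest: leD)
      then show ?thesis by simp
    qed (use deg dmax in simp)
  qed
  have dmin': "\<forall>w<n. nbhd n E w \<noteq> {}"
    using deg dmin by (metis card.empty)
  have cN: "card (?N a \<union> ?N b) \<le> 2 * (D + 1)" for a b
  proof -
    have "card (?N a \<union> ?N b) \<le> card (?N a) + card (?N b)" by (rule card_Un_le)
    also have "\<dots> \<le> (D + 1) + (D + 1)"
      using card_closed_nbhd_le dmax' by (intro add_mono) auto
    finally show ?thesis by simp
  qed
  have "?C \<noteq> {}" using c2 by auto
  then obtain a1 b1 where e1: "(a1, b1) \<in> ?C" by auto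
  show ?thesis
  proof (cases "\<exists>(a2, b2) \<in> ?C. a2 \<notin> ?N a1 \<and> b2 \<notin> ?N b1")
    case True
    then show ?thesis using cut_edges_decrease_two_switch[OF r n A e1] by blast
  next
    case False
    then have cC: "card ?C \<le> 2 * (D + 1) * D"
      by (intro card_cut_edges_le_if_covered[OF sg dmax']) blast
    have "card (?C - {(a1, b1)}) \<noteq> 0"
      using c2 e1 finite_cut_edges[OF A] by simp
    then have "?C - {(a1, b1)} \<noteq> {}" by (metis card.empty)
    then obtain a2 b2 where e2: "(a2, b2) \<in> ?C" "(a1, b1) \<noteq> (a2, b2)" by auto
    have "2 * (D + 1) + 2 * (D + 1) * D + 2 * (D + 1) * D \<le> 4 * (D + 1) * (D + 1)"
      by (simp add: algebra_simps)
    then have bigA: "2 * (D + 1) + 2 * (D + 1) * D + 2 * (D + 1) * D < card A"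
      and bigB: "2 * (D + 1) + 2 * (D + 1) * D + 2 * (D + 1) * D < card ({..<n} - A)"
      using cA cB by linarith+
    obtain x y where xy: "x \<in> A" "y \<in> A" "E x y" "{x, y} \<inter> (?N a1 \<union> ?N a2) = {}"
      using exists_edge_avoiding[OF sg A _ cN[of a1 a2] dmax' dmin' cC bigA] by auto
    have B: "{..<n} - A \<subseteq> {..<n}" by blast
    have "card (cut_edges n ({..<n} - A) E) \<le> card ?C"
      unfolding cut_edges_complement[OF sg A] by (rule card_image_le[OF finite_cut_edges[OF A]])
    then have cCB: "card (cut_edges n ({..<n} - A) E) \<le> 2 * (D + 1) * D"
      using cC by linarith
    obtain u v where uv: "u \<in> {..<n} - A" "v \<in> {..<n} - A" "E u v"
        "{u, v} \<inter> (?N b1 \<union> ?N b2) = {}"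
      using exists_edge_avoiding[OF sg B _ cN[of b1 b2] dmax' dmin' cCB bigB] by auto
    show ?thesis
      by (rule cut_edges_decrease_four_switch[OF r n A e1 e2(1,2) xy]) (use uv in auto)
  qed
qed

lemma exists_even_sum_half:
  fixes f :: "nat \<Rightarrow> nat"
  assumes "even (\<Sum>i<n. f i)"
  obtains A where "A \<subseteq> {..<n}" "even (\<Sum>i\<in>A. f i)" "n div 2 \<le> card A" "card A \<le> n div 2 + 1"
proof (cases "even (\<Sum>i<n div 2. f i)")
  case True
  then show ?thesis by (intro that[of "{..<n div 2}"]) auto
next
  case False
  have "(\<Sum>i<n. f i) = (\<Sum>i<n div 2. f i) + (\<Sum>i\<in>{n div 2..<n}. f i)"
    by (simp add: lessThan_atLeast0 sum.atLeastLessThan_concat)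
  then obtain j where j: "j \<in> {n div 2..<n}" "odd (f j)"
    using assms False by (metis odd_add dvd_sum)
  then have "even (\<Sum>i\<in>insert j {..<n div 2}. f i)"
    using False by simp
  then show ?thesis using j by (intro that[of "insert j {..<n div 2}"]) auto
qed

lemma not_forcibly_connected_if_isolated:
  assumes r: "realizes E d" and z: "z < length d" "d ! z = 0" and two: "2 \<le> length d"
  shows "\<not> forcibly_connected d"
proof -
  have "cut_edges (length d) {z} E = {}"
    using realizes_card_nbhd[OF r z(1)] z(2) unfolding cut_edges_def nbhd_def by auto
  moreover obtain w where "w < length d" "w \<noteq> z"
    using two by (intro that[of "if z = 0 then 1 else 0"]) auto
  ultimately have "\<not> connected_on (length d) E"
    using not_connected_if_cut_edges_empty[OF realizes_simple_graph[OF r], of "{z}" z w] z by auto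
  then show ?thesis using r unfolding forcibly_connected_def by blast
qed

lemma realization_with_empty_cut:
  assumes r0: "realizes E0 d" and n: "n = length d" and A: "A \<subseteq> {..<n}"
    and even: "even (\<Sum>i\<in>A. d ! i)"
    and dmax: "\<forall>i<n. d ! i \<le> D" and dmin: "\<forall>i<n. d ! i \<noteq> 0"
    and cA: "4 * (D + 1) * (D + 1) < card A" and cB: "4 * (D + 1) * (D + 1) < card ({..<n} - A)"
  obtains E where "realizes E d" "cut_edges n A E = {}"
proof -
  obtain E where r: "realizes E d"
      and min: "\<forall>E'. realizes E' d \<longrightarrow> card (cut_edges n A E) \<le> card (cut_edges n A E')"
    using ex_has_least_nat[of "\<lambda>E. realizes E d" E0 "\<lambda>E. card (cut_edges n A E)"] r0 by blast
  have "(\<Sum>i\<in>A. d ! i) = (\<Sum>i\<in>A. card (nbhd n E i))"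
    using realizes_card_nbhd[OF r] A n by (intro sum.cong) auto
  then have "even (card (cut_edges n A E))"
    using even_sum_card_nbhd_iff[OF realizes_simple_graph[OF r, folded n] A] even by simp
  moreover have "\<not> card (cut_edges n A E) \<ge> 2"
    using cut_edges_decrease[OF r n A dmax dmin cA cB] min by (meson leD)
  ultimately have "card (cut_edges n A E) = 0" by (auto simp: not_le less_Suc_eq numeral_2_eq_2)
  then show ?thesis using that r finite_cut_edges[OF A] by simp
qed

lemma not_forcibly_connected_if_long:
  assumes g: "graphical d" and dmax: "\<forall>i<length d. d ! i \<le> D"
    and long: "64 * (D + 1) * (D + 1) < length d"
  shows "\<not> forcibly_connected d"
proof -
  define n where "n = length d"
  obtain E0 where r0: "realizes E0 d" using g unfolding graphical_def by blast
  show ?thesis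
  proof (cases "\<exists>z<n. d ! z = 0")
    case True
    then show ?thesis
      using not_forcibly_connected_if_isolated[OF r0] long unfolding n_def by auto
  next
    case False
    have "(\<Sum>i<n. d ! i) = (\<Sum>i<n. card (nbhd n E0 i))"
      using realizes_card_nbhd[OF r0] unfolding n_def by simp
    moreover have "cut_edges n {..<n} E0 = {}" unfolding cut_edges_def by auto
    ultimately have "even (\<Sum>i<n. d ! i)"
      using even_sum_card_nbhd_iff[OF realizes_simple_graph[OF r0, folded n_def], of "{..<n}"] by simp
    then obtain A where A: "A \<subseteq> {..<n}" "even (\<Sum>i\<in>A. d ! i)" "n div 2 \<le> card A" "card A \<le> n div 2 + 1"
      by (rule exists_even_sum_half)
    have "card ({..<n} - A) = n - card A"
      using A(1) by (simp add: card_Diff_subset finite_subset)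
    then have big: "4 * (D + 1) * (D + 1) < card A" "4 * (D + 1) * (D + 1) < card ({..<n} - A)"
      using long A(3,4) div_mult_mod_eq[of n 2] mod_less_divisor[of 2 n]
        le_add2[of 1 "(D + 1) * D"] unfolding n_def mult.assoc by (simp_all add: algebra_simps)
    obtain E where r: "realizes E d" and cut: "cut_edges n A E = {}"
      using realization_with_empty_cut[OF r0 n_def A(1,2) dmax[folded n_def] _ big] False by auto
    obtain a b where "a \<in> A" "b \<in> {..<n} - A"
      using big by (metis all_not_in_conv card.empty not_less_zero)
    then have "\<not> connected_on n E"
      using not_connected_if_cut_edges_empty[OF realizes_simple_graph[OF r, folded n_def] A(1) _ _ _ cut] by blast
    then show ?thesis using r unfolding forcibly_connected_def n_def by blast
  qed
qed

lemma forcibly_connected_complete: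
  assumes "n \<ge> 2"
  shows "forcibly_connected (replicate n (n - 1))"
proof -
  let ?d = "replicate n (n - 1)"
  have "realizes (\<lambda>i j. i < n \<and> j < n \<and> i \<noteq> j) ?d"
    unfolding realizes_def
  proof (intro conjI allI impI)
    show "simple_graph_on (length ?d) (\<lambda>i j. i < n \<and> j < n \<and> i \<noteq> j)"
      unfolding simple_graph_on_def by simp
    fix i assume i: "i < length ?d"
    have "{j. j < n \<and> i < n \<and> j < n \<and> i \<noteq> j} = {..<n} - {i}"
      using i by auto
    then show "degree_in (length ?d) (\<lambda>i j. i < n \<and> j < n \<and> i \<noteq> j) i = ?d ! i"
      using i unfolding degree_in_def by simp
  qed
  moreover have "connected_on n E" if r: "realizes E ?d" for E
  proof -
    have "E i j" if "i < n" "j < n" "i \<noteq> j" for i j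
    proof -
      have "nbhd n E i \<subseteq> {..<n} - {i}"
        using r unfolding realizes_def simple_graph_on_def nbhd_def by auto
      moreover have "card (nbhd n E i) = card ({..<n} - {i})"
        using realizes_card_nbhd[OF r] that by simp
      ultimately have "nbhd n E i = {..<n} - {i}" by (intro card_subset_eq) auto
      then show ?thesis using that unfolding nbhd_def by auto
    qed
    then show ?thesis
      unfolding connected_on_def by (metis (mono_tags) case_prodI mem_Collect_eq r_into_rtrancl rtrancl.rtrancl_refl)
  qed
  ultimately show ?thesis
    unfolding forcibly_connected_def graphical_def by (auto simp: sorted_wrt_iff_nth_less)
qed

lemma Max_le_length_if_graphical:
  assumes "graphical d" "d \<noteq> []"
  shows "Max (set d) \<le> length d"
proof -
  obtain E where r: "realizes E d" using assms(1) unfolding graphical_def by blast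
  obtain i where i: "i < length d" "d ! i = Max (set d)"
    using assms(2) Max_in[of "set d"] by (metis finite_set in_set_conv_nth set_empty)
  have "card (nbhd (length d) E i) \<le> length d"
    unfolding nbhd_def by (rule card_mono[of "{..<length d}", simplified]) auto
  then show ?thesis using realizes_card_nbhd[OF r i(1)] i(2) by simp
qed

lemma M_attained:
  assumes "n \<ge> 2"
  obtains d where "length d = n" "forcibly_connected d" "M n = Max (set d)"
proof -
  define S where "S = {Max (set d) | d. length d = n \<and> forcibly_connected d}"
  have "Max (set (replicate n (n - 1))) \<in> S"
    unfolding S_def using forcibly_connected_complete[OF assms] by auto
  moreover have "S \<subseteq> {..n}"
    using Max_le_length_if_graphical assms unfolding S_def forcibly_connected_def by fastforce
  ultimately have "M n \<in> S"
    unfolding M_def S_def[symmetric] by (intro Min_in) (auto intro: finite_subset[OF _ finite_atMost])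
  then show ?thesis using that unfolding S_def by blast
qed

lemma length_le_M:
  assumes "n \<ge> 2"
  shows "n \<le> 64 * (M n + 1) * (M n + 1)"
proof -
  obtain d where d: "length d = n" "forcibly_connected d" "M n = Max (set d)"
    using M_attained[OF assms] .
  then have "\<forall>i<length d. d ! i \<le> M n" by simp
  then show ?thesis
    using not_forcibly_connected_if_long[of d "M n"] d unfolding forcibly_connected_def
    by (meson not_le)
qed

theorem theorem1:
  shows "\<exists>c > 0. \<exists>N. \<forall>n \<ge> N. real (M n) > c * sqrt (real n)"
proof (intro exI[of _ "1/16"] conjI exI[of _ 257] allI impI)
  fix n :: nat
  assume n: "n \<ge> 257"
  have "real n \<le> real (64 * (M n + 1) * (M n + 1))"
    using length_le_M[of n] n by (simp only: of_nat_le_iff)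
  also have "\<dots> = (8 * (real (M n) + 1))\<^sup>2"
    by (simp add: power2_eq_square algebra_simps)
  finally have "real n \<le> (8 * (real (M n) + 1))\<^sup>2" .
  then have "sqrt (real n) \<le> 8 * real (M n) + 8"
    using real_le_lsqrt by (simp add: real_sqrt_le_iff)
  moreover have "16 < sqrt (real n)"
    using n real_less_rsqrt[of 16 "real n"] by simp
  ultimately show "1/16 * sqrt (real n) < real (M n)" by linarith
qed simp

end
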